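(* Let $q$ be real with $0<q<1$ and consider the limit $q\to1-0$. (i) If $\mathbf{k}$ is an admissible index, then $\lim_{q \to 1-0}Z_{q}(g_{\mathbf{k}})=\zeta(\mathbf{k})$. (ii) For any $w \in \mathfrak{n}$, $\lim_{q \to 1-0}Z_{q}(w)=0$.
   Context: Indices: an index is a finite (possibly empty) tuple $\mathbf k=(k_1,\dots,k_r)$ of positive integers; admissible if empty or $k_r\ge2$. For admissible non-empty $\mathbf k$, $\zeta(\mathbf k)=\sum_{0<m_1<\cdots<m_r}m_1^{-k_1}\cdots m_r^{-k_r}$, and $\zeta(\varnothing)=1$. Let $\mathcal{C}=\mathbb{Q}[\hbar]$ ($\hbar$ formal), $\mathfrak{H}=\mathcal{C}\langle a,b\rangle$. For $k\ge1$, $g_k=ba^k$; $g_{\mathbf k}=g_{k_1}\cdots g_{k_r}$, $g_\varnothing=1$. $A=\{\hbar b\}\cup\{ba^k\mid k\ge1\}$, $\mathcal{C}\langle A\rangle$ the $\mathcal{C}$-subalgebra generated by $1$ and $A$, $\mathfrak z$ the $\mathcal C$-span of $A$, $\widehat{\mathfrak H^0}=\mathcal C+\sum_{k\ge1}\mathcal C\langle A\rangle g_k$. For $0<q<1$, $\mathbb{C}$ is a $\mathcal{C}$-module with $\hbar$ acting by $1-q$; $[m]=(1-q^m)/(1-q)$; $F_q(m;\cdot):\mathfrak{z}\to\mathbb{C}$ is $\mathcal{C}$-linear with $F_q(m;\hbar b)=1-q$, $F_q(m;g_k)=q^{km}/[m]^k$; $Z_{q,M}$ is $\mathcal{C}$-linear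 on $\mathcal C\langle A\rangle$ with $Z_{q,M}(1)=1$, $Z_{q,M}(u_1\cdots u_r)=\sum_{0<m_1<\cdots<m_r<M}\prod_i F_q(m_i;u_i)$ ($u_i\in A$); $Z_q(w)=\lim_{M\to\infty}Z_{q,M}(w)$ for $w\in\widehat{\mathfrak H^0}$. Let $\mathfrak n_0$ be the $\mathcal C$-span of the elements $(\hbar b)^{\alpha_1}g_{\beta_1+1}\cdots(\hbar b)^{\alpha_r}g_{\beta_r+1}$ with $r\ge1$, $\alpha_i,\beta_i\ge0$, such that $\alpha_s\ge1$ and $\beta_t\ge1$ for some $1\le s\le t\le r$; and $\mathfrak n=\mathfrak n_0+\hbar\widehat{\mathfrak H^0}$ (where $\hbar$ acts on values as $1-q$). *)

theory Defs
  imports Complex_Main "HOL-Computational_Algebra.Polynomial"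
begin

text \<open>
A word in the alphabet A = {hbar b} \<union> {b a^k | k \<ge> 1} is a list of
naturals: the letter 0 stands for hbar b, the letter k \<ge> 1 stands for g_k = b a^k.
Since A generates a free subalgebra of H, C<A> is the free C-module on such words;
an element of C<A> is a finitely supported function from words to C = Q[hbar]
(rat poly, the indeterminate being hbar).
\<close>

type_synonym CAelem = "nat list \<Rightarrow> rat poly"

definition fsupp :: "CAelem \<Rightarrow> bool" where
  "fsupp c \<longleftrightarrow> finite {w. c w \<noteq> 0}"

definition CA :: "CAelem set" where
  "CA = {c. fsupp c}"

text \<open>hat H^0 = C + sum_k C<A> g_k: support on words that are empty or end in some g_k.\<close>
definition H0hat :: "CAelem set" where
  "H0hat = {c \<in> CA. \<forall>w. c w \<noteq> 0 \<longrightarrow> w = [] \<or> last w \<ge> 1}"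

text \<open>The word (hbar b)^alpha_1 g_(beta_1+1) ... (hbar b)^alpha_r g_(beta_r+1).\<close>
definition ab_word :: "nat list \<Rightarrow> nat list \<Rightarrow> nat list" where
  "ab_word \<alpha> \<beta> = concat (map (\<lambda>(a, b). replicate a 0 @ [b + 1]) (zip \<alpha> \<beta>))"

definition n0_word :: "nat list \<Rightarrow> bool" where
  "n0_word w \<longleftrightarrow> (\<exists>\<alpha> \<beta>. length \<alpha> = length \<beta> \<and> length \<alpha> \<ge> 1 \<and> w = ab_word \<alpha> \<beta> \<and>
      (\<exists>s t. s \<le> t \<and> t < length \<alpha> \<and> \<alpha> ! s \<ge> 1 \<and> \<beta> ! t \<ge> 1))"

definition n0 :: "CAelem set" where
  "n0 = {c \<in> CA. \<forall>w. c w \<noteq> 0 \<longrightarrow> n0_word w}"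

definition nset :: "CAelem set" where
  "nset = {(\<lambda>w. x w + [:0, 1:] * y w) | x y. x \<in> n0 \<and> y \<in> H0hat}"

definition gidx :: "nat list \<Rightarrow> CAelem" where
  "gidx ks = (\<lambda>w. if w = ks then 1 else 0)"

definition admissible :: "nat list \<Rightarrow> bool" where
  "admissible ks \<longleftrightarrow> (\<forall>k\<in>set ks. k \<ge> 1) \<and> (ks = [] \<or> last ks \<ge> 2)"

definition incseqs :: "nat \<Rightarrow> nat \<Rightarrow> nat list set" where
  "incseqs r M = {ms. length ms = r \<and> sorted_wrt (<) ms \<and> (\<forall>m\<in>set ms. 0 < m \<and> m < M)}"

definition qint :: "real \<Rightarrow> nat \<Rightarrow> real" where
  "qint q m = (1 - q ^ m) / (1 - q)"

definition Fq :: "real \<Rightarrow> nat \<Rightarrow> nat \<Rightarrow> real" where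
  "Fq q m u = (if u = 0 then 1 - q else q ^ (u * m) / (qint q m) ^ u)"

definition ZqM_word :: "real \<Rightarrow> nat \<Rightarrow> nat list \<Rightarrow> real" where
  "ZqM_word q M us = (\<Sum>ms\<in>incseqs (length us) M. \<Prod>i<length us. Fq q (ms ! i) (us ! i))"

text \<open>Z_{q,M}, C-linear, hbar acting by 1 - q.\<close>
definition ZqM :: "real \<Rightarrow> nat \<Rightarrow> CAelem \<Rightarrow> real" where
  "ZqM q M c = (\<Sum>w\<in>{w. c w \<noteq> 0}. poly (map_poly of_rat (c w)) (1 - q) * ZqM_word q M w)"

definition Zq :: "real \<Rightarrow> CAelem \<Rightarrow> real" where
  "Zq q c = lim (\<lambda>M. ZqM q M c)"

definition mzv :: "nat list \<Rightarrow> real" where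
  "mzv ks = lim (\<lambda>M. \<Sum>ms\<in>incseqs (length ks) M. \<Prod>i<length ks. 1 / real (ms ! i) ^ (ks ! i))"

end

theory Submission
  imports Defs "HOL-Analysis.Harmonic_Numbers" "HOL-Real_Asymp.Real_Asymp"
begin

text \<open>
  Write \<epsilon> = 1 - q and L = 1 + ln (1/\<epsilon>). For a word ending in some g_k, Z_{q,M} is an
  iterated sum of nonnegative weights over 0 < m_1 < \<dots> < m_r < M, increasing in M.
  For (i), F_q(m; g_k) \<le> 1/m^k with limit 1/m^k, so Z_q(g_k) is squeezed between truncations
  of \<zeta>(k) and \<zeta>(k) itself.
  For (ii), the partial sums up to n of every letter weight are at most L (1 + \<epsilon> n), while the
  weight q^m/[m] of the last letter, summed against (1 + \<epsilon> m)^s, is O(L): it is at most 1/m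
  below m = 1/\<epsilon> and decays like \<epsilon> exp(-\<epsilon> m) above. Hence Z_q(w) = O(L^|w|) on hat H^0,
  which the factor \<epsilon> of \<hbar> hat H^0 kills. In a word of n_0 the factor \<epsilon> of some \<hbar>b survives,
  paid for by a later g_k with k \<ge> 2, so that Z_q(w) = O(\<epsilon> L^|w|) \<rightarrow> 0.
\<close>

section \<open>Iterated sums over increasing tuples\<close>

definition incr_tuples :: "nat \<Rightarrow> nat \<Rightarrow> nat \<Rightarrow> nat list set" where
  "incr_tuples a r b = {ms. length ms = r \<and> sorted_wrt (<) ms \<and> (\<forall>m\<in>set ms. a < m \<and> m < b)}"

definition nested_sum :: "(nat \<Rightarrow> real) list \<Rightarrow> nat \<Rightarrow> nat \<Rightarrow> real" where
  "nested_sum fs a b = (\<Sum>ms\<in>incr_tuples a (length fs) b. \<Prod>i<length fs. (fs ! i) (ms ! i))"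

lemma finite_incr_tuples: "finite (incr_tuples a r b)"
proof (rule finite_subset)
  show "incr_tuples a r b \<subseteq> {ms. set ms \<subseteq> {..<b} \<and> length ms = r}"
    by (auto simp: incr_tuples_def)
qed (simp add: finite_lists_length_eq)

lemma incr_tuples_0 [simp]: "incr_tuples a 0 b = {[]}"
  by (auto simp: incr_tuples_def)

lemma incr_tuples_Suc:
  "incr_tuples a (Suc r) b = (\<lambda>(m, ms). m # ms) ` (SIGMA m:{a<..<b}. incr_tuples m r b)"
  by (auto simp: incr_tuples_def length_Suc_conv image_iff) (meson less_trans)+

lemma nested_sum_Nil [simp]: "nested_sum [] a b = 1"
  by (simp add: nested_sum_def)

lemma nested_sum_Cons: "nested_sum (f # fs) a b = (\<Sum>m\<in>{a<..<b}. f m * nested_sum fs m b)"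
proof -
  let ?r = "length fs"
  have "nested_sum (f # fs) a b
      = (\<Sum>(m, ms)\<in>(SIGMA m:{a<..<b}. incr_tuples m ?r b). \<Prod>i<Suc ?r. ((f # fs) ! i) ((m # ms) ! i))"
    unfolding nested_sum_def length_Cons incr_tuples_Suc
    by (subst sum.reindex) (auto simp: inj_on_def case_prod_unfold)
  also have "\<dots> = (\<Sum>(m, ms)\<in>(SIGMA m:{a<..<b}. incr_tuples m ?r b). f m * (\<Prod>i<?r. (fs ! i) (ms ! i)))"
    by (simp add: prod.lessThan_Suc_shift del: prod.lessThan_Suc)
  also have "\<dots> = (\<Sum>m\<in>{a<..<b}. f m * nested_sum fs m b)"
    by (subst sum.Sigma[symmetric]) (auto simp: finite_incr_tuples nested_sum_def sum_distrib_left)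
  finally show ?thesis .
qed

lemma nested_sum_append_Cons:
  "nested_sum (fs @ f # gs) a b = (\<Sum>m\<in>{a<..<b}. nested_sum fs a m * f m * nested_sum gs m b)"
proof (induction fs arbitrary: a)
  case Nil
  then show ?case by (simp add: nested_sum_Cons)
next
  case (Cons h fs)
  have "nested_sum ((h # fs) @ f # gs) a b
      = (\<Sum>l\<in>{a<..<b}. \<Sum>m\<in>{m\<in>{a<..<b}. l < m}. h l * (nested_sum fs l m * f m * nested_sum gs m b))"
    by (auto simp: nested_sum_Cons Cons.IH sum_distrib_left intro!: sum.cong)
  also have "\<dots> = (\<Sum>m\<in>{a<..<b}. \<Sum>l\<in>{l\<in>{a<..<b}. l < m}. h l * (nested_sum fs l m * f m * nested_sum gs m b))"
    by (rule sum.swap_restrict) auto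
  also have "\<dots> = (\<Sum>m\<in>{a<..<b}. nested_sum (h # fs) a m * f m * nested_sum gs m b)"
    by (auto simp: nested_sum_Cons sum_distrib_right mult.assoc intro!: sum.cong)
  finally show ?case .
qed

lemma nested_sum_snoc: "nested_sum (fs @ [f]) a b = (\<Sum>m\<in>{a<..<b}. nested_sum fs a m * f m)"
  by (simp add: nested_sum_append_Cons)

lemma nested_sum_nonneg:
  assumes "\<And>f m. f \<in> set fs \<Longrightarrow> a < m \<Longrightarrow> 0 \<le> f m"
  shows "0 \<le> nested_sum fs a b"
  unfolding nested_sum_def
  by (intro sum_nonneg prod_nonneg) (auto simp: incr_tuples_def intro!: assms)

lemma nested_sum_mono:
  assumes "list_all2 (\<lambda>f g. \<forall>m>a. 0 \<le> f m \<and> f m \<le> g m) fs gs"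
  shows "nested_sum fs a b \<le> nested_sum gs a b"
proof -
  have len: "length fs = length gs"
    and le: "\<And>i m. i < length fs \<Longrightarrow> a < m \<Longrightarrow> 0 \<le> (fs ! i) m \<and> (fs ! i) m \<le> (gs ! i) m"
    using assms by (auto simp: list_all2_conv_all_nth)
  show ?thesis
    unfolding nested_sum_def len[symmetric]
    by (intro sum_mono prod_mono) (auto simp: incr_tuples_def len intro!: le)
qed

lemma nested_sum_mono_upper:
  assumes "\<And>f m. f \<in> set fs \<Longrightarrow> a < m \<Longrightarrow> 0 \<le> f m" and "b \<le> b'"
  shows "nested_sum fs a b \<le> nested_sum fs a b'"
  unfolding nested_sum_def
  by (intro sum_mono2 finite_incr_tuples prod_nonneg) (use assms in \<open>auto simp: incr_tuples_def\<close>)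

section \<open>The letter weights\<close>

definition qweight :: "real \<Rightarrow> nat \<Rightarrow> real" where
  "qweight q m = q ^ m / qint q m"

lemma qint_eq_sum: "q \<noteq> 1 \<Longrightarrow> qint q m = (\<Sum>i<m. q ^ i)"
  by (simp add: qint_def sum_gp_strict)

lemma qint_ge:
  assumes "0 < q" "q < 1"
  shows "real m * q ^ m \<le> qint q m"
proof -
  have "(\<Sum>i<m. q ^ m) \<le> (\<Sum>i<m. q ^ i)"
    by (intro sum_mono power_decreasing) (use assms in auto)
  then show ?thesis
    using assms by (simp add: qint_eq_sum)
qed

lemma qint_pos: "0 < q \<Longrightarrow> q < 1 \<Longrightarrow> 0 < m \<Longrightarrow> 0 < qint q m"
  by (rule less_le_trans[OF _ qint_ge]) auto

lemma qweight_nonneg: "0 < q \<Longrightarrow> q < 1 \<Longrightarrow> 0 < m \<Longrightarrow> 0 \<le> qweight q m"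
  using qint_pos[of q m] by (simp add: qweight_def)

lemma qweight_le_inverse:
  assumes "0 < q" "q < 1" "0 < m"
  shows "qweight q m \<le> 1 / real m"
  using qint_ge[OF assms(1,2), of m] qint_pos[OF assms] assms(3)
  by (simp add: qweight_def field_simps)

lemma qweight_le_1: "0 < q \<Longrightarrow> q < 1 \<Longrightarrow> 0 < m \<Longrightarrow> qweight q m \<le> 1"
  by (rule order_trans[OF qweight_le_inverse]) auto

lemma Fq_eq_qweight_power: "1 \<le> k \<Longrightarrow> Fq q m k = qweight q m ^ k"
  by (simp add: Fq_def qweight_def power_divide mult.commute flip: power_mult)

lemma Fq_0 [simp]: "Fq q m 0 = 1 - q"
  by (simp add: Fq_def)

lemma Fq_nonneg: "0 < q \<Longrightarrow> q < 1 \<Longrightarrow> 0 < m \<Longrightarrow> 0 \<le> Fq q m u"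
  by (cases "u = 0") (auto simp: Fq_eq_qweight_power qweight_nonneg)

lemma Fq_le_qweight:
  assumes "0 < q" "q < 1" "0 < m" "1 \<le> k"
  shows "Fq q m k \<le> qweight q m"
  using power_decreasing[of 1 k "qweight q m"] assms
  by (simp add: Fq_eq_qweight_power qweight_nonneg qweight_le_1)

lemma Fq_le_inverse_power:
  assumes "0 < q" "q < 1" "0 < m" "1 \<le> k"
  shows "Fq q m k \<le> 1 / real m ^ k"
  using power_mono[OF qweight_le_inverse qweight_nonneg, of q m k] assms
  by (simp add: Fq_eq_qweight_power power_one_over)

lemma Fq_le_qweight_div:
  assumes "0 < q" "q < 1" "0 < m" "2 \<le> k"
  shows "Fq q m k \<le> qweight q m / real m"
proof -
  have "Fq q m k \<le> qweight q m ^ 2"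
    using power_decreasing[of 2 k "qweight q m"] assms
    by (simp add: Fq_eq_qweight_power qweight_nonneg qweight_le_1)
  also have "\<dots> \<le> qweight q m * (1 / real m)"
    unfolding power2_eq_square using assms
    by (intro mult_left_mono qweight_le_inverse qweight_nonneg)
  finally show ?thesis by simp
qed

section \<open>Partial sums of the letter weights\<close>

lemma sum_inverse_le_1_plus_ln: "1 \<le> n \<Longrightarrow> (\<Sum>m\<in>{0<..n}. 1 / real m) \<le> 1 + ln (real n)"
proof -
  assume "1 \<le> n"
  then have "harm n - ln (real n) \<le> harm 1 - ln (real 1)"
    by (intro euler_mascheroni_sequence_decreasing) auto
  moreover have "{0<..n} = {1..n}" by auto
  ultimately show ?thesis
    by (simp add: harm_def divide_inverse)
qed

definition qlog :: "real \<Rightarrow> real" where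
  "qlog q = 1 + ln (1 / (1 - q))"

text \<open>The weight 1 - q of \<hbar>b has partial sums below (1 - q) n; the other weights are at most
  1/m, with partial sums below 1 + ln n \<le> qlog q + (1 - q) n.\<close>

definition qbound :: "real \<Rightarrow> nat \<Rightarrow> real" where
  "qbound q n = qlog q * (1 + (1 - q) * real n)"

lemma qlog_ge_1: "0 < q \<Longrightarrow> q < 1 \<Longrightarrow> 1 \<le> qlog q"
  by (simp add: qlog_def)

lemma qbound_ge_1:
  assumes "0 < q" "q < 1"
  shows "1 \<le> qbound q n"
proof -
  have "1 * 1 \<le> qlog q * (1 + (1 - q) * real n)"
    using qlog_ge_1[OF assms] assms by (intro mult_mono) auto
  then show ?thesis by (simp add: qbound_def)
qed

lemma qbound_mono: "0 < q \<Longrightarrow> q < 1 \<Longrightarrow> m \<le> n \<Longrightarrow> qbound q m \<le> qbound q n"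
  unfolding qbound_def using qlog_ge_1[of q]
  by (intro mult_left_mono) (auto intro!: mult_left_mono)

lemma sum_inverse_le_qbound:
  assumes "0 < q" "q < 1"
  shows "(\<Sum>m\<in>{0<..<n}. 1 / real m) \<le> qbound q n"
proof (cases "n = 0")
  case True
  then show ?thesis using qbound_ge_1[OF assms, of 0] by simp
next
  case False
  let ?e = "1 - q"
  have "(\<Sum>m\<in>{0<..<n}. 1 / real m) \<le> (\<Sum>m\<in>{0<..n}. 1 / real m)"
    by (intro sum_mono2) auto
  also have "\<dots> \<le> 1 + ln (real n)"
    using False by (intro sum_inverse_le_1_plus_ln) auto
  also have "ln (real n) = ln (1 / ?e) + ln (?e * real n)"
    using assms False by (simp add: ln_mult ln_div)
  also have "ln (?e * real n) \<le> ?e * real n - 1"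
    using assms False by (intro ln_le_minus_one) simp
  finally have "(\<Sum>m\<in>{0<..<n}. 1 / real m) \<le> qlog q + ?e * real n"
    by (simp add: qlog_def)
  also have "\<dots> \<le> qlog q + qlog q * (?e * real n)"
    using mult_right_mono[OF qlog_ge_1[OF assms], of "?e * real n"] assms by simp
  also have "\<dots> = qbound q n"
    by (simp add: qbound_def algebra_simps)
  finally show ?thesis .
qed

definition qbounded :: "real \<Rightarrow> (nat \<Rightarrow> real) \<Rightarrow> bool" where
  "qbounded q f \<longleftrightarrow> (\<forall>m>0. 0 \<le> f m) \<and> (\<forall>n. (\<Sum>m\<in>{0<..<n}. f m) \<le> qbound q n)"

lemma qbounded_if_le_inverse:
  assumes "0 < q" "q < 1" and "\<And>m. 0 < m \<Longrightarrow> 0 \<le> f m \<and> f m \<le> 1 / real m"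
  shows "qbounded q f"
  unfolding qbounded_def
  using assms order_trans[OF sum_mono sum_inverse_le_qbound[OF assms(1,2)]] by auto

lemma qbounded_Fq:
  assumes "0 < q" "q < 1"
  shows "qbounded q (\<lambda>m. Fq q m u)"
proof (cases "u = 0")
  case True
  have "(1 - q) * real (n - 1) \<le> qbound q n" for n
  proof -
    have "(1 - q) * real (n - 1) \<le> (1 - q) * real n"
      using assms by (intro mult_left_mono) auto
    also have "\<dots> \<le> 1 + (1 - q) * real n" by simp
    also have "\<dots> \<le> qbound q n"
      using mult_right_mono[OF qlog_ge_1[OF assms], of "1 + (1 - q) * real n"] assms
      by (simp add: qbound_def)
    finally show ?thesis .
  qed
  then show ?thesis
    using assms True unfolding qbounded_def by (simp add: mult.commute)
next
  case False
  then show ?thesis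
    using assms by (intro qbounded_if_le_inverse)
      (auto simp: Fq_nonneg intro: order_trans[OF Fq_le_qweight qweight_le_inverse])
qed

section \<open>The weight of the last letter\<close>

lemma one_plus_power_le_exp:
  fixes x :: real
  assumes "0 \<le> x"
  shows "(1 + x) ^ s \<le> (2 * real s + 1) ^ s * exp (x / 2)"
proof -
  let ?c = "2 * real s + 1"
  have "1 + x \<le> ?c * (1 + x / ?c)"
    using assms by (simp add: field_simps)
  also have "\<dots> \<le> ?c * exp (x / ?c)"
    by (intro mult_left_mono exp_ge_add_one_self) auto
  finally have "(1 + x) ^ s \<le> (?c * exp (x / ?c)) ^ s"
    using assms by (intro power_mono) auto
  also have "\<dots> = ?c ^ s * exp (real s * (x / ?c))"
    by (simp add: power_mult_distrib flip: exp_of_nat_mult)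
  also have "\<dots> \<le> ?c ^ s * exp (x / 2)"
    using assms by (intro mult_left_mono) (auto simp: field_simps)
  finally show ?thesis .
qed

lemma power_le_exp_neg: "0 < q \<Longrightarrow> q ^ n \<le> exp (- ((1 - q) * real n))"
  using power_mono[OF exp_ge_add_one_self[of "q - 1"], of n]
  by (simp add: exp_of_nat_mult[symmetric] algebra_simps)

lemma qweight_le_exp:
  assumes "0 < q" "q < 1" "1 < (1 - q) * real n"
  shows "qweight q n \<le> 2 * (1 - q) * exp (- ((1 - q) * real n))"
proof -
  have "q ^ n \<le> exp (- 1)"
    by (rule order_trans[OF power_le_exp_neg[OF assms(1)]]) (use assms(3) in simp)
  also have "exp (- 1 :: real) \<le> 1 / 2"
    using exp_ge_add_one_self[of "1 :: real"] by (simp add: exp_minus field_simps)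
  finally have "q ^ n \<le> 1 / 2" .
  then have "qweight q n = (1 - q) * q ^ n / (1 - q ^ n)"
    using assms by (simp add: qweight_def qint_def field_simps)
  also have "\<dots> \<le> (1 - q) * q ^ n / (1 / 2)"
    using assms \<open>q ^ n \<le> 1 / 2\<close> by (intro divide_left_mono) auto
  also have "\<dots> = 2 * (1 - q) * q ^ n"
    by simp
  also have "\<dots> \<le> 2 * (1 - q) * exp (- ((1 - q) * real n))"
    using power_le_exp_neg[OF assms(1), of n] assms by (intro mult_left_mono) auto
  finally show ?thesis .
qed

lemma qweight_term_bound:
  assumes q: "0 < q" "q < 1" and n: "0 < n"
  shows "(1 + (1 - q) * real n) ^ s * qweight q n
     \<le> 2 ^ s * (if (1 - q) * real n \<le> 1 then 1 / real n else 0)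
       + 2 * (2 * real s + 1) ^ s * (1 - q) * exp (- (1 - q) / 2) ^ n"
proof (cases "(1 - q) * real n \<le> 1")
  case True
  have "(1 + (1 - q) * real n) ^ s * qweight q n \<le> 2 ^ s * (1 / real n)"
    using True q n qweight_le_inverse[OF q n] qweight_nonneg[OF q n]
    by (intro mult_mono power_mono) auto
  then show ?thesis
    using True q by (simp add: add_increasing2)
next
  case False
  let ?x = "(1 - q) * real n"
  have "(1 + ?x) ^ s * qweight q n \<le> ((2 * real s + 1) ^ s * exp (?x / 2)) * (2 * (1 - q) * exp (- ?x))"
    using False q qweight_nonneg[OF q n]
    by (intro mult_mono one_plus_power_le_exp qweight_le_exp) auto
  also have "\<dots> = 2 * (2 * real s + 1) ^ s * (1 - q) * (exp (?x / 2) * exp (- ?x))"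
    by (simp add: ac_simps)
  also have "exp (?x / 2) * exp (- ?x) = exp (- (1 - q) / 2) ^ n"
    by (simp add: field_simps flip: exp_add exp_of_nat_mult)
  finally show ?thesis
    using False by simp
qed

lemma sum_inverse_small_le_qlog:
  assumes q: "0 < q" "q < 1"
  shows "(\<Sum>n\<in>{0<..<N}. if (1 - q) * real n \<le> 1 then 1 / real n else 0) \<le> qlog q"
proof -
  define J where "J = nat \<lfloor>1 / (1 - q)\<rfloor>"
  have J: "1 \<le> J" "real J \<le> 1 / (1 - q)"
    using q by (auto simp: J_def le_nat_floor one_le_floor)
  have "(\<Sum>n\<in>{0<..<N}. if (1 - q) * real n \<le> 1 then 1 / real n else 0)
      = (\<Sum>n\<in>{n\<in>{0<..<N}. (1 - q) * real n \<le> 1}. 1 / real n)"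
    by (rule sum.inter_filter[symmetric]) simp
  also have "\<dots> \<le> (\<Sum>n\<in>{0<..J}. 1 / real n)"
    using q by (intro sum_mono2) (auto simp: J_def le_nat_floor field_simps)
  also have "\<dots> \<le> 1 + ln (real J)"
    using J by (intro sum_inverse_le_1_plus_ln)
  also have "\<dots> \<le> qlog q"
    using J q by (simp add: qlog_def)
  finally show ?thesis .
qed

lemma sum_exp_geometric_le:
  fixes q :: real
  assumes q: "0 < q" "q < 1"
  shows "(1 - q) * (\<Sum>n\<in>{0<..<N}. exp (- (1 - q) / 2) ^ n) \<le> 4"
proof -
  let ?x = "(1 - q) / 2"
  let ?r = "exp (- (1 - q) / 2)"
  have r: "0 < ?r" "?r < 1" using q by auto
  have "?r * (1 + ?x) \<le> ?r * exp ?x"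
    by (intro mult_left_mono exp_ge_add_one_self) auto
  also have "?r * exp ?x = 1"
    by (simp add: field_simps flip: exp_add)
  finally have "?r \<le> 1 / (1 + ?x)"
    using q by (simp add: field_simps)
  moreover have "(1 - q) / 4 \<le> 1 - 1 / (1 + ?x)"
    using q by (simp add: field_simps mult_le_one)
  ultimately have gap: "(1 - q) / 4 \<le> 1 - ?r"
    by linarith
  have "(\<Sum>n\<in>{0<..<N}. ?r ^ n) \<le> (\<Sum>n<N. ?r ^ n)"
    by (intro sum_mono2) (use r in auto)
  also have "\<dots> = (1 - ?r ^ N) / (1 - ?r)"
    using r by (simp add: sum_gp_strict)
  also have "\<dots> \<le> 1 / ((1 - q) / 4)"
    using r q gap by (intro frac_le) auto
  finally have "(1 - q) * (\<Sum>n\<in>{0<..<N}. ?r ^ n) \<le> (1 - q) * (1 / ((1 - q) / 4))"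
    using q by (intro mult_left_mono) auto
  also have "\<dots> = 4"
    using q by (simp add: field_simps)
  finally show ?thesis .
qed

definition tail_const :: "nat \<Rightarrow> real" where
  "tail_const s = 2 ^ s + 8 * (2 * real s + 1) ^ s"

lemma sum_qbound_power_qweight_le:
  assumes q: "0 < q" "q < 1"
  shows "(\<Sum>n\<in>{0<..<N}. qbound q n ^ s * qweight q n) \<le> tail_const s * qlog q ^ Suc s"
proof -
  let ?C = "2 * (2 * real s + 1) ^ s"
  have "(\<Sum>n\<in>{0<..<N}. (1 + (1 - q) * real n) ^ s * qweight q n)
      \<le> (\<Sum>n\<in>{0<..<N}. 2 ^ s * (if (1 - q) * real n \<le> 1 then 1 / real n else 0)
                         + ?C * (1 - q) * exp (- (1 - q) / 2) ^ n)"
    by (intro sum_mono qweight_term_bound[OF q]) auto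
  also have "\<dots> = 2 ^ s * (\<Sum>n\<in>{0<..<N}. if (1 - q) * real n \<le> 1 then 1 / real n else 0)
                  + ?C * ((1 - q) * (\<Sum>n\<in>{0<..<N}. exp (- (1 - q) / 2) ^ n))"
    by (simp add: sum.distrib sum_distrib_left mult.assoc)
  also have "\<dots> \<le> 2 ^ s * qlog q + ?C * 4"
    by (intro add_mono mult_left_mono sum_inverse_small_le_qlog sum_exp_geometric_le q) auto
  also have "\<dots> \<le> tail_const s * qlog q"
    using qlog_ge_1[OF q] by (simp add: tail_const_def algebra_simps)
  finally have "(\<Sum>n\<in>{0<..<N}. (1 + (1 - q) * real n) ^ s * qweight q n) \<le> tail_const s * qlog q" .
  then have "qlog q ^ s * (\<Sum>n\<in>{0<..<N}. (1 + (1 - q) * real n) ^ s * qweight q n)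
      \<le> qlog q ^ s * (tail_const s * qlog q)"
    using qlog_ge_1[OF q] by (intro mult_left_mono) auto
  then show ?thesis
    by (simp add: qbound_def power_mult_distrib sum_distrib_left ac_simps)
qed

section \<open>Uniform bounds for words\<close>

lemma nested_sum_le_qbound_power:
  assumes q: "0 < q" "q < 1" and "\<forall>f\<in>set fs. qbounded q f"
  shows "nested_sum fs 0 n \<le> qbound q n ^ length fs"
  using assms(3)
proof (induction fs arbitrary: n rule: rev_induct)
  case Nil
  then show ?case by simp
next
  case (snoc f fs)
  have f: "qbounded q f" and fs: "\<forall>f\<in>set fs. qbounded q f"
    using snoc.prems by auto
  have "nested_sum (fs @ [f]) 0 n = (\<Sum>m\<in>{0<..<n}. nested_sum fs 0 m * f m)"
    by (rule nested_sum_snoc)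
  also have "\<dots> \<le> (\<Sum>m\<in>{0<..<n}. qbound q n ^ length fs * f m)"
  proof (intro sum_mono mult_right_mono)
    fix m assume m: "m \<in> {0<..<n}"
    show "nested_sum fs 0 m \<le> qbound q n ^ length fs"
      using snoc.IH[OF fs, of m] power_mono[OF qbound_mono[OF q, of m n], of "length fs"] m
        qbound_ge_1[OF q, of m] by force
    show "0 \<le> f m"
      using f m by (simp add: qbounded_def)
  qed
  also have "\<dots> \<le> qbound q n ^ length fs * qbound q n"
    using f qbound_ge_1[OF q, of n] by (simp add: qbounded_def flip: sum_distrib_left)
  finally show ?case by (simp add: mult.commute)
qed

lemma nested_sum_snoc_le_qlog_power:
  assumes q: "0 < q" "q < 1" and "\<forall>f\<in>set fs. qbounded q f"
    and f: "\<And>m. 0 < m \<Longrightarrow> 0 \<le> f m \<and> f m \<le> qweight q m"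
  shows "nested_sum (fs @ [f]) 0 N \<le> tail_const (length fs) * qlog q ^ Suc (length fs)"
proof -
  have "nested_sum (fs @ [f]) 0 N = (\<Sum>m\<in>{0<..<N}. nested_sum fs 0 m * f m)"
    by (rule nested_sum_snoc)
  also have "\<dots> \<le> (\<Sum>m\<in>{0<..<N}. qbound q m ^ length fs * qweight q m)"
    using f nested_sum_le_qbound_power[OF assms(1-3)] order_trans[OF zero_le_one qbound_ge_1[OF q]]
    by (intro sum_mono mult_mono) auto
  also have "\<dots> \<le> tail_const (length fs) * qlog q ^ Suc (length fs)"
    by (rule sum_qbound_power_qweight_le[OF q])
  finally show ?thesis .
qed

abbreviation Fq_factors :: "real \<Rightarrow> nat list \<Rightarrow> (nat \<Rightarrow> real) list" where
  "Fq_factors q us \<equiv> map (\<lambda>u m. Fq q m u) us"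

lemma ZqM_word_eq_nested_sum: "ZqM_word q M us = nested_sum (Fq_factors q us) 0 M"
  by (simp add: ZqM_word_def nested_sum_def incseqs_def incr_tuples_def)

lemma nested_sum_Fq_factors_nonneg: "0 < q \<Longrightarrow> q < 1 \<Longrightarrow> 0 \<le> nested_sum (Fq_factors q us) a b"
  by (intro nested_sum_nonneg) (auto intro: Fq_nonneg)

lemma ZqM_word_le_qlog_power:
  assumes q: "0 < q" "q < 1" and w: "w = [] \<or> 1 \<le> last w"
  shows "ZqM_word q M w \<le> tail_const (length w - 1) * qlog q ^ length w"
proof (cases w rule: rev_cases)
  case Nil
  then show ?thesis by (simp add: ZqM_word_eq_nested_sum tail_const_def)
next
  case (snoc p k)
  then have "1 \<le> k" using w by simp
  then have "nested_sum (Fq_factors q p @ [\<lambda>m. Fq q m k]) 0 M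
      \<le> tail_const (length (Fq_factors q p)) * qlog q ^ Suc (length (Fq_factors q p))"
    using q by (intro nested_sum_snoc_le_qlog_power) (auto simp: qbounded_Fq Fq_nonneg Fq_le_qweight)
  then show ?thesis
    by (simp add: ZqM_word_eq_nested_sum snoc)
qed

text \<open>The factor 1 - q of the letter \<hbar>b at l is kept, while the letter g_k, k \<ge> 2, at m > l
  pays for the harmonic weight 1/l put in place of \<hbar>b: F_q(m; g_k) \<le> qweight q m / m \<le> qweight q m / l.\<close>

lemma nested_sum_Fq_factors_hbar_le:
  assumes q: "0 < q" "q < 1" and k: "2 \<le> k"
  shows "nested_sum (Fq_factors q (p @ 0 # v @ k # x)) 0 N
    \<le> (1 - q) * nested_sum (Fq_factors q p @ (\<lambda>m. 1 / real m) # Fq_factors q v @ qweight q # Fq_factors q x) 0 N"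
proof -
  let ?N = "\<lambda>us a b. nested_sum (Fq_factors q us) a b"
  let ?G = "\<lambda>l. nested_sum (Fq_factors q v @ qweight q # Fq_factors q x) l N"
  have inner: "nested_sum (Fq_factors q v @ (\<lambda>m. Fq q m k) # Fq_factors q x) l N \<le> ?G l / real l" if "0 < l" for l
  proof -
    have "nested_sum (Fq_factors q v @ (\<lambda>m. Fq q m k) # Fq_factors q x) l N
        = (\<Sum>m\<in>{l<..<N}. ?N v l m * Fq q m k * ?N x m N)"
      by (simp add: nested_sum_append_Cons)
    also have "\<dots> \<le> (\<Sum>m\<in>{l<..<N}. ?N v l m * (qweight q m / real l) * ?N x m N)"
    proof (intro sum_mono mult_right_mono mult_left_mono)
      fix m assume m: "m \<in> {l<..<N}"
      then have "Fq q m k \<le> qweight q m / real m"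
        using q k that by (intro Fq_le_qweight_div) auto
      also have "\<dots> \<le> qweight q m / real l"
        using m that q by (intro divide_left_mono qweight_nonneg) auto
      finally show "Fq q m k \<le> qweight q m / real l" .
    qed (use q nested_sum_Fq_factors_nonneg in auto)
    also have "\<dots> = ?G l / real l"
      by (simp add: nested_sum_append_Cons sum_divide_distrib)
    finally show ?thesis .
  qed
  have "nested_sum (Fq_factors q (p @ 0 # v @ k # x)) 0 N
      = (\<Sum>l\<in>{0<..<N}. ?N p 0 l * (1 - q) * nested_sum (Fq_factors q v @ (\<lambda>m. Fq q m k) # Fq_factors q x) l N)"
    by (simp add: nested_sum_append_Cons)
  also have "\<dots> \<le> (\<Sum>l\<in>{0<..<N}. ?N p 0 l * (1 - q) * (?G l / real l))"
    using q inner nested_sum_Fq_factors_nonneg by (intro sum_mono mult_left_mono) auto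
  also have "\<dots> = (1 - q) * (\<Sum>l\<in>{0<..<N}. ?N p 0 l * (1 / real l) * ?G l)"
    by (simp add: sum_distrib_left mult_ac)
  also have "\<dots> = (1 - q) * nested_sum (Fq_factors q p @ (\<lambda>m. 1 / real m) # Fq_factors q v @ qweight q # Fq_factors q x) 0 N"
    by (simp only: nested_sum_append_Cons[of "Fq_factors q p"])
  finally show ?thesis .
qed

lemma ZqM_word_le_diff_qlog_power:
  assumes q: "0 < q" "q < 1" and w: "w = p @ 0 # v @ k # x" and k: "2 \<le> k" and last: "1 \<le> last w"
  shows "ZqM_word q M w \<le> (1 - q) * (tail_const (length w - 1) * qlog q ^ length w)"
proof -
  define gs where "gs = Fq_factors q p @ (\<lambda>m. 1 / real m) # Fq_factors q v @ qweight q # Fq_factors q x"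
  have "qbounded q (\<lambda>m. 1 / real m)" "qbounded q (qweight q)"
    using q by (auto intro!: qbounded_if_le_inverse qweight_nonneg qweight_le_inverse)
  then have bounded: "\<forall>f\<in>set gs. qbounded q f"
    using q by (auto simp: gs_def qbounded_Fq)
  obtain fs f where gs: "gs = fs @ [f]" and f: "\<And>m. 0 < m \<Longrightarrow> 0 \<le> f m \<and> f m \<le> qweight q m"
  proof (cases x rule: rev_cases)
    case Nil
    then show ?thesis
      using that[of "Fq_factors q p @ (\<lambda>m. 1 / real m) # Fq_factors q v" "qweight q"] q
      by (auto simp: gs_def qweight_nonneg)
  next
    case (snoc x' k')
    then have "1 \<le> k'" using last w by simp
    then show ?thesis
      using that[of "Fq_factors q p @ (\<lambda>m. 1 / real m) # Fq_factors q v @ qweight q # Fq_factors q x'" "\<lambda>m. Fq q m k'"] q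
      by (auto simp: gs_def snoc Fq_nonneg Fq_le_qweight)
  qed
  have len: "length fs = length w - 1" "Suc (length w - 1) = length w"
    using arg_cong[OF gs, of length] w by (simp_all add: gs_def)
  have "ZqM_word q M w \<le> (1 - q) * nested_sum gs 0 M"
    unfolding ZqM_word_eq_nested_sum w gs_def by (rule nested_sum_Fq_factors_hbar_le[OF q k])
  also have "\<dots> \<le> (1 - q) * (tail_const (length fs) * qlog q ^ Suc (length fs))"
    using bounded q unfolding gs by (intro mult_left_mono nested_sum_snoc_le_qlog_power f) auto
  finally show ?thesis
    unfolding len .
qed

section \<open>The limit q \<rightarrow> 1 on \<hbar> hat H^0 and n_0\<close>

definition Zq_word :: "real \<Rightarrow> nat list \<Rightarrow> real" where
  "Zq_word q w = lim (\<lambda>M. ZqM_word q M w)"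

lemma incseq_ZqM_word: "0 < q \<Longrightarrow> q < 1 \<Longrightarrow> incseq (\<lambda>M. ZqM_word q M w)"
  unfolding incseq_def ZqM_word_eq_nested_sum
  by (intro allI impI nested_sum_mono_upper) (auto intro: Fq_nonneg)

lemma ZqM_word_LIMSEQ:
  assumes q: "0 < q" "q < 1" and w: "w = [] \<or> 1 \<le> last w"
  shows "(\<lambda>M. ZqM_word q M w) \<longlonglongrightarrow> Zq_word q w"
proof -
  have "bdd_above (range (\<lambda>M. ZqM_word q M w))"
    using ZqM_word_le_qlog_power[OF q w] by (intro bdd_aboveI2)
  then have "convergent (\<lambda>M. ZqM_word q M w)"
    using LIMSEQ_incseq_SUP[OF _ incseq_ZqM_word[OF q]] by (auto simp: convergent_def)
  then show ?thesis
    by (simp add: Zq_word_def convergent_LIMSEQ_iff)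
qed

lemma Zq_word_bounds:
  assumes q: "0 < q" "q < 1" and w: "w = [] \<or> 1 \<le> last w" and B: "\<And>M. ZqM_word q M w \<le> B"
  shows "0 \<le> Zq_word q w" "Zq_word q w \<le> B"
  using LIMSEQ_le_const[OF ZqM_word_LIMSEQ[OF q w], of 0] LIMSEQ_le_const2[OF ZqM_word_LIMSEQ[OF q w], of B]
  by (auto simp: B[unfolded ZqM_word_eq_nested_sum] ZqM_word_eq_nested_sum nested_sum_Fq_factors_nonneg q)

lemma filterlim_qlog_at_left_1: "filterlim qlog at_top (at_left 1)"
  unfolding qlog_def by real_asymp

lemma eventually_at_left_1: "eventually (\<lambda>q. 0 < q \<and> q < 1) (at_left (1::real))"
  using eventually_at_left_real[of 0 1] by simp

lemma tendsto_diff_qlog_power: "((\<lambda>q. (1 - q) * qlog q ^ e) \<longlongrightarrow> 0) (at_left (1::real))"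
proof -
  have "((\<lambda>q. exp 1 * (qlog q ^ e / exp (qlog q))) \<longlongrightarrow> exp 1 * 0) (at_left (1::real))"
    by (intro tendsto_mult_left filterlim_compose[OF tendsto_power_div_exp_0 filterlim_qlog_at_left_1])
  moreover have "eventually (\<lambda>q. exp 1 * (qlog q ^ e / exp (qlog q)) = (1 - q) * qlog q ^ e) (at_left (1::real))"
    using eventually_at_left_1 by eventually_elim (simp add: qlog_def exp_add)
  ultimately show ?thesis
    by (simp add: tendsto_cong)
qed

lemma tendsto_zero_if_le_diff_qlog_power:
  assumes "eventually (\<lambda>q. 0 \<le> f q \<and> f q \<le> C * ((1 - q) * qlog q ^ e)) (at_left (1::real))"
  shows "(f \<longlongrightarrow> 0) (at_left (1::real))"
proof (rule tendsto_sandwich[where f = "\<lambda>_. 0"])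
  show "((\<lambda>q. C * ((1 - q) * qlog q ^ e)) \<longlongrightarrow> 0) (at_left 1)"
    using tendsto_mult_left[OF tendsto_diff_qlog_power, of C e] by simp
qed (use assms in \<open>auto elim: eventually_mono\<close>)

lemma poly_of_rat_add_hbar:
  "poly (map_poly (of_rat :: rat \<Rightarrow> real) (a + [:0, 1:] * b)) t
    = poly (map_poly of_rat a) t + t * poly (map_poly of_rat b) t"
proof -
  have "map_poly (of_rat :: rat \<Rightarrow> real) (a + pCons 0 b) = map_poly of_rat a + pCons 0 (map_poly of_rat b)"
    by (rule poly_eqI) (simp add: coeff_map_poly of_rat_add coeff_pCons split: nat.split)
  then show ?thesis by simp
qed

lemma H0hat_fsupp: "c \<in> H0hat \<Longrightarrow> fsupp c"
  by (simp add: H0hat_def CA_def)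

lemma ZqM_eq_sum:
  assumes "finite S" "{w. c w \<noteq> 0} \<subseteq> S"
  shows "ZqM q M c = (\<Sum>w\<in>S. poly (map_poly of_rat (c w)) (1 - q) * ZqM_word q M w)"
  unfolding ZqM_def by (rule sum.mono_neutral_left) (use assms in auto)

lemma ZqM_add_hbar:
  assumes "fsupp x" "fsupp y"
  shows "ZqM q M (\<lambda>w. x w + [:0, 1:] * y w) = ZqM q M x + (1 - q) * ZqM q M y"
proof -
  define S where "S = {w. x w \<noteq> 0} \<union> {w. y w \<noteq> 0}"
  have S: "finite S" using assms by (simp add: S_def fsupp_def)
  have "ZqM q M (\<lambda>w. x w + [:0, 1:] * y w)
      = (\<Sum>w\<in>S. poly (map_poly of_rat (x w + [:0, 1:] * y w)) (1 - q) * ZqM_word q M w)"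
    by (rule ZqM_eq_sum[OF S]) (auto simp: S_def)
  also have "\<dots> = (\<Sum>w\<in>S. (poly (map_poly of_rat (x w)) (1 - q)
                          + (1 - q) * poly (map_poly of_rat (y w)) (1 - q)) * ZqM_word q M w)"
    by (simp only: poly_of_rat_add_hbar)
  also have "\<dots> = ZqM q M x + (1 - q) * ZqM q M y"
    by (simp add: ZqM_eq_sum[OF S] S_def distrib_right sum.distrib sum_distrib_left mult.assoc)
  finally show ?thesis .
qed

lemma ZqM_LIMSEQ:
  assumes q: "0 < q" "q < 1" and c: "c \<in> H0hat"
  shows "(\<lambda>M. ZqM q M c) \<longlonglongrightarrow> (\<Sum>w | c w \<noteq> 0. poly (map_poly of_rat (c w)) (1 - q) * Zq_word q w)"
  unfolding ZqM_def
  using c by (intro tendsto_sum tendsto_mult_left ZqM_word_LIMSEQ[OF q]) (auto simp: H0hat_def)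

lemma Zq_eq_sum:
  assumes "0 < q" "q < 1" "c \<in> H0hat"
  shows "Zq q c = (\<Sum>w | c w \<noteq> 0. poly (map_poly of_rat (c w)) (1 - q) * Zq_word q w)"
  unfolding Zq_def using ZqM_LIMSEQ[OF assms] by (rule limI)

lemma Zq_add_hbar:
  assumes q: "0 < q" "q < 1" and "x \<in> H0hat" "y \<in> H0hat"
  shows "Zq q (\<lambda>w. x w + [:0, 1:] * y w) = Zq q x + (1 - q) * Zq q y"
proof -
  have "(\<lambda>M. ZqM q M (\<lambda>w. x w + [:0, 1:] * y w)) \<longlonglongrightarrow> Zq q x + (1 - q) * Zq q y"
    unfolding ZqM_add_hbar[OF H0hat_fsupp[OF assms(3)] H0hat_fsupp[OF assms(4)]]
    by (intro tendsto_add tendsto_mult_left) (auto simp: Zq_eq_sum ZqM_LIMSEQ q assms)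
  then show ?thesis
    unfolding Zq_def by (rule limI)
qed

lemma tendsto_mult_Zq_zero:
  assumes c: "c \<in> H0hat"
    and words: "\<And>w. c w \<noteq> 0 \<Longrightarrow> ((\<lambda>q. h q * Zq_word q w) \<longlongrightarrow> 0) (at_left 1)"
  shows "((\<lambda>q. h q * Zq q c) \<longlongrightarrow> 0) (at_left 1)"
proof -
  let ?P = "\<lambda>w q. poly (map_poly of_rat (c w)) (1 - q)"
  have "((\<lambda>q. \<Sum>w | c w \<noteq> 0. ?P w q * (h q * Zq_word q w))
      \<longlongrightarrow> (\<Sum>w | c w \<noteq> 0. ?P w 1 * 0)) (at_left 1)"
    by (intro tendsto_sum tendsto_mult words) (auto intro!: tendsto_eq_intros)
  moreover have "eventually (\<lambda>q. (\<Sum>w | c w \<noteq> 0. ?P w q * (h q * Zq_word q w)) = h q * Zq q c) (at_left 1)"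
    using eventually_at_left_1 by eventually_elim (simp add: Zq_eq_sum c sum_distrib_left ac_simps)
  ultimately show ?thesis
    by (simp add: tendsto_cong)
qed

lemma ab_word_Cons: "ab_word (a # \<alpha>) (b # \<beta>) = replicate a 0 @ Suc b # ab_word \<alpha> \<beta>"
  by (simp add: ab_word_def)

lemma last_ab_word:
  assumes "length \<alpha> = length \<beta>" "\<alpha> \<noteq> []"
  shows "ab_word \<alpha> \<beta> \<noteq> [] \<and> last (ab_word \<alpha> \<beta>) = Suc (last \<beta>)"
proof -
  obtain \<alpha>' a \<beta>' b where "\<alpha> = \<alpha>' @ [a]" "\<beta> = \<beta>' @ [b]" "length \<alpha>' = length \<beta>'"
    using assms by (metis length_0_conv rev_exhaust length_append_singleton Suc_inject)
  then show ?thesis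
    by (simp add: ab_word_def)
qed

lemma Suc_nth_in_ab_word:
  "length \<alpha> = length \<beta> \<Longrightarrow> t < length \<beta> \<Longrightarrow> Suc (\<beta> ! t) \<in> set (ab_word \<alpha> \<beta>)"
proof (induction \<alpha> \<beta> arbitrary: t rule: list_induct2)
  case (Cons a \<alpha> b \<beta>)
  then show ?case by (cases t) (auto simp: ab_word_Cons)
qed simp

lemma ab_word_zero_before:
  "length \<alpha> = length \<beta> \<Longrightarrow> s \<le> t \<Longrightarrow> t < length \<alpha> \<Longrightarrow> 1 \<le> \<alpha> ! s \<Longrightarrow>
    \<exists>p rest. ab_word \<alpha> \<beta> = p @ 0 # rest \<and> Suc (\<beta> ! t) \<in> set rest"
proof (induction \<alpha> \<beta> arbitrary: s t rule: list_induct2)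
  case (Cons a \<alpha> b \<beta>)
  show ?case
  proof (cases s)
    case 0
    then obtain a' where a: "a = Suc a'" using Cons.prems by (cases a) auto
    have "Suc ((b # \<beta>) ! t) \<in> set (replicate a' 0 @ Suc b # ab_word \<alpha> \<beta>)"
      using Cons Suc_nth_in_ab_word by (cases t) auto
    then show ?thesis
      by (intro exI[of _ "[]"] exI[of _ "replicate a' 0 @ Suc b # ab_word \<alpha> \<beta>"]) (simp add: ab_word_Cons a)
  next
    case (Suc s')
    then obtain t' where t: "t = Suc t'" using Cons.prems by (cases t) auto
    obtain p rest where "ab_word \<alpha> \<beta> = p @ 0 # rest" "Suc (\<beta> ! t') \<in> set rest"
      using Cons.IH[of s' t'] Cons.prems Suc t by auto
    then show ?thesis
      by (intro exI[of _ "replicate a 0 @ Suc b # p"] exI[of _ rest]) (simp add: ab_word_Cons t)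
  qed
qed simp

lemma n0_wordE:
  assumes "n0_word w"
  obtains p v k x where "w = p @ 0 # v @ k # x" "2 \<le> k" "1 \<le> last w"
proof -
  obtain \<alpha> \<beta> s t where len: "length \<alpha> = length \<beta>" and w: "w = ab_word \<alpha> \<beta>"
    and st: "s \<le> t" "t < length \<alpha>" "1 \<le> \<alpha> ! s" "1 \<le> \<beta> ! t"
    using assms unfolding n0_word_def by blast
  obtain p rest where "w = p @ 0 # rest" "Suc (\<beta> ! t) \<in> set rest"
    using ab_word_zero_before[OF len(1) st(1-3)] w by blast
  moreover have "\<alpha> \<noteq> []"
    using st(2) by auto
  then have "1 \<le> last w"
    using last_ab_word[OF len] w by simp
  ultimately show ?thesis
    using that st(4) by (metis split_list Suc_le_mono one_add_one plus_1_eq_Suc)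
qed

lemma tendsto_Zq_word_n0:
  assumes "n0_word w"
  shows "((\<lambda>q. Zq_word q w) \<longlongrightarrow> 0) (at_left 1)"
proof -
  obtain p v k x where w: "w = p @ 0 # v @ k # x" "2 \<le> k" "1 \<le> last w"
    using assms by (rule n0_wordE)
  show ?thesis
  proof (rule tendsto_zero_if_le_diff_qlog_power)
    show "eventually (\<lambda>q. 0 \<le> Zq_word q w \<and> Zq_word q w \<le> tail_const (length w - 1) * ((1 - q) * qlog q ^ length w))
        (at_left 1)"
      using eventually_at_left_1
    proof eventually_elim
      case (elim q)
      then have q: "0 < q" "q < 1" by auto
      show ?case
        using Zq_word_bounds[OF q _ ZqM_word_le_diff_qlog_power[OF q w]] w(3) by (simp add: ac_simps)
    qed
  qed
qed

lemma tendsto_diff_Zq_word: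
  assumes w: "w = [] \<or> 1 \<le> last w"
  shows "((\<lambda>q. (1 - q) * Zq_word q w) \<longlongrightarrow> 0) (at_left 1)"
proof (rule tendsto_zero_if_le_diff_qlog_power)
  show "eventually (\<lambda>q. 0 \<le> (1 - q) * Zq_word q w
      \<and> (1 - q) * Zq_word q w \<le> tail_const (length w - 1) * ((1 - q) * qlog q ^ length w)) (at_left 1)"
    using eventually_at_left_1
  proof eventually_elim
    case (elim q)
    then have q: "0 < q" "q < 1" by auto
    show ?case
      using Zq_word_bounds[OF q w ZqM_word_le_qlog_power[OF q w]] q
      by (auto simp: mult.left_commute intro: mult_left_mono)
  qed
qed

lemma n0_subset_H0hat: "n0 \<subseteq> H0hat"
proof -
  have "1 \<le> last w" if "n0_word w" for w
    using that by (rule n0_wordE)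
  then show ?thesis
    by (fastforce simp: n0_def H0hat_def)
qed

theorem tendsto_Zq_nset:
  assumes "c \<in> nset"
  shows "((\<lambda>q. Zq q c) \<longlongrightarrow> 0) (at_left 1)"
proof -
  obtain x y where c: "c = (\<lambda>w. x w + [:0, 1:] * y w)" and x: "x \<in> n0" and y: "y \<in> H0hat"
    using assms unfolding nset_def by blast
  have x': "x \<in> H0hat"
    using x n0_subset_H0hat by blast
  have "((\<lambda>q. 1 * Zq q x) \<longlongrightarrow> 0) (at_left 1)"
    using x' x by (intro tendsto_mult_Zq_zero) (auto simp: n0_def tendsto_Zq_word_n0)
  moreover have "((\<lambda>q. (1 - q) * Zq q y) \<longlongrightarrow> 0) (at_left 1)"
    using y by (intro tendsto_mult_Zq_zero tendsto_diff_Zq_word) (auto simp: H0hat_def)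
  ultimately have "((\<lambda>q. Zq q x + (1 - q) * Zq q y) \<longlongrightarrow> 0) (at_left 1)"
    using tendsto_add by fastforce
  moreover have "eventually (\<lambda>q. Zq q x + (1 - q) * Zq q y = Zq q c) (at_left 1)"
    using eventually_at_left_1
  proof eventually_elim
    case (elim q)
    then show ?case
      unfolding c by (intro Zq_add_hbar[symmetric] x' y) auto
  qed
  ultimately show ?thesis
    by (simp add: tendsto_cong)
qed

section \<open>The limit q \<rightarrow> 1 on admissible indices\<close>

lemma tendsto_of_approximations_below:
  fixes g :: "'a \<Rightarrow> 'b :: linorder_topology"
  assumes approx: "\<And>M. (f M \<longlongrightarrow> l M) F" and "l \<longlonglongrightarrow> L"
    and below: "eventually (\<lambda>x. \<forall>M. f M x \<le> g x) F" and above: "eventually (\<lambda>x. g x \<le> L) F"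
  shows "(g \<longlongrightarrow> L) F"
proof (rule order_tendstoI)
  fix a assume "a < L"
  then obtain M where "a < l M"
    using order_tendstoD(1)[OF \<open>l \<longlonglongrightarrow> L\<close>] by (auto simp: eventually_sequentially)
  then have "eventually (\<lambda>x. a < f M x) F"
    using approx by (rule order_tendstoD(1)[rotated])
  with below show "eventually (\<lambda>x. a < g x) F"
    by eventually_elim (blast intro: less_le_trans)
next
  fix a assume "L < a"
  with above show "eventually (\<lambda>x. g x < a) F"
    by (auto elim: eventually_mono intro: le_less_trans)
qed

abbreviation mzv_factors :: "nat list \<Rightarrow> (nat \<Rightarrow> real) list" where
  "mzv_factors ks \<equiv> map (\<lambda>k m. 1 / real m ^ k) ks"

lemma sum_inverse_squares_le:
  assumes "1 \<le> a"
  shows "(\<Sum>m\<in>{a<..<b}. 1 / real m ^ 2) \<le> 1 / real a"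
proof (cases "a < b")
  case True
  have "1 / real m ^ 2 \<le> (- 1 / real m) - (- 1 / real (m - 1))" if "2 \<le> m" for m
    using that by (simp add: of_nat_diff field_simps power2_eq_square)
  moreover have "{a<..<b} = {Suc a..b - 1}"
    using True by auto
  ultimately have "(\<Sum>m\<in>{a<..<b}. 1 / real m ^ 2) \<le> (\<Sum>m\<in>{Suc a..b - 1}. (- 1 / real m) - (- 1 / real (m - 1)))"
    using assms by (auto intro!: sum_mono)
  also have "\<dots> = - 1 / real (b - 1) + 1 / real a"
    using True by (subst sum_telescope'') auto
  also have "\<dots> \<le> 1 / real a"
    by simp
  finally show ?thesis .
qed simp

lemma nested_sum_mzv_factors_le:
  "admissible ks \<Longrightarrow> ks \<noteq> [] \<Longrightarrow> nested_sum (mzv_factors ks) a b \<le> (\<Sum>m\<in>{a<..<b}. 1 / real m ^ 2)"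
proof (induction ks arbitrary: a)
  case (Cons k ks)
  have "1 / real m ^ k * nested_sum (mzv_factors ks) m b \<le> 1 / real m ^ 2" if "a < m" for m
  proof (cases "ks = []")
    case True
    then have "2 \<le> k"
      using Cons.prems by (simp add: admissible_def)
    with True that show ?thesis
      by (simp add: power_increasing divide_left_mono)
  next
    case False
    then have "1 \<le> k" "admissible ks"
      using Cons.prems by (auto simp: admissible_def)
    have "nested_sum (mzv_factors ks) m b \<le> 1 / real m"
      using order_trans[OF Cons.IH[OF \<open>admissible ks\<close> False] sum_inverse_squares_le[of m b]] that by simp
    moreover have "1 / real m ^ k \<le> 1 / real m"
      using power_increasing[of 1 k "real m"] \<open>1 \<le> k\<close> that by (intro divide_left_mono) auto
    ultimately have "1 / real m ^ k * nested_sum (mzv_factors ks) m b \<le> 1 / real m * (1 / real m)"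
      by (intro mult_mono nested_sum_nonneg) auto
    then show ?thesis
      by (simp add: power2_eq_square)
  qed
  then show ?case
    unfolding list.map nested_sum_Cons by (intro sum_mono) auto
qed simp

lemma nested_sum_mzv_factors_le_2:
  assumes "admissible ks"
  shows "nested_sum (mzv_factors ks) 0 b \<le> 2"
proof (cases "ks = []")
  case False
  have "(\<Sum>m\<in>{0<..<b}. 1 / real m ^ 2) \<le> (\<Sum>m\<in>insert 1 {1<..<b}. 1 / real m ^ 2)"
    by (intro sum_mono2) auto
  also have "\<dots> \<le> 1 + 1"
    using sum_inverse_squares_le[of 1 b] by simp
  finally show ?thesis
    using nested_sum_mzv_factors_le[OF assms False, of 0 b] by simp
qed simp

lemma incseq_nested_sum_mzv_factors: "incseq (\<lambda>M. nested_sum (mzv_factors ks) 0 M)"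
  by (intro incseq_SucI nested_sum_mono_upper) auto

lemma mzv_LIMSEQ:
  assumes "admissible ks"
  shows "(\<lambda>M. nested_sum (mzv_factors ks) 0 M) \<longlonglongrightarrow> mzv ks"
proof -
  note incseq_nested_sum_mzv_factors
  moreover have "bdd_above (range (\<lambda>M. nested_sum (mzv_factors ks) 0 M))"
    using nested_sum_mzv_factors_le_2[OF assms] by (intro bdd_aboveI2)
  ultimately have "convergent (\<lambda>M. nested_sum (mzv_factors ks) 0 M)"
    using LIMSEQ_incseq_SUP by (auto simp: convergent_def)
  then show ?thesis
    by (simp add: mzv_def nested_sum_def incseqs_def incr_tuples_def convergent_LIMSEQ_iff)
qed

lemma tendsto_Fq:
  assumes "0 < m" "1 \<le> k"
  shows "((\<lambda>q. Fq q m k) \<longlongrightarrow> 1 / real m ^ k) (at_left 1)"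
proof -
  have "((\<lambda>q. q ^ (k * m) / (\<Sum>i<m. q ^ i) ^ k) \<longlongrightarrow> 1 / real m ^ k) (at_left (1::real))"
    using assms by (auto intro!: tendsto_eq_intros)
  moreover have "eventually (\<lambda>q. q ^ (k * m) / (\<Sum>i<m. q ^ i) ^ k = Fq q m k) (at_left 1)"
    using eventually_at_left_1 by eventually_elim (use assms in \<open>auto simp: Fq_def qint_eq_sum\<close>)
  ultimately show ?thesis
    by (rule Lim_transform_eventually)
qed

lemma tendsto_ZqM_word:
  assumes "\<forall>k\<in>set ks. 1 \<le> k"
  shows "((\<lambda>q. ZqM_word q M ks) \<longlongrightarrow> nested_sum (mzv_factors ks) 0 M) (at_left 1)"
  unfolding ZqM_word_eq_nested_sum nested_sum_def length_map
  using assms by (intro tendsto_sum tendsto_prod) (auto simp: incr_tuples_def intro!: tendsto_Fq)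

lemma ZqM_word_le_nested_sum_mzv_factors:
  assumes "0 < q" "q < 1" "\<forall>k\<in>set ks. 1 \<le> k"
  shows "ZqM_word q M ks \<le> nested_sum (mzv_factors ks) 0 M"
  unfolding ZqM_word_eq_nested_sum using assms
  by (intro nested_sum_mono) (auto simp: list_all2_conv_all_nth intro: Fq_nonneg Fq_le_inverse_power)

lemma Zq_gidx: "Zq q (gidx ks) = Zq_word q ks"
proof -
  have "{w. gidx ks w \<noteq> 0} = {ks}"
    by (auto simp: gidx_def)
  then show ?thesis
    by (simp add: Zq_def Zq_word_def ZqM_def gidx_def)
qed

theorem tendsto_Zq_gidx:
  assumes adm: "admissible ks"
  shows "((\<lambda>q. Zq q (gidx ks)) \<longlongrightarrow> mzv ks) (at_left 1)"
  unfolding Zq_gidx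
proof (rule tendsto_of_approximations_below[OF tendsto_ZqM_word mzv_LIMSEQ[OF adm]])
  have ks: "\<forall>k\<in>set ks. 1 \<le> k" "ks = [] \<or> 1 \<le> last ks"
    using adm by (auto simp: admissible_def)
  then show "\<forall>k\<in>set ks. 1 \<le> k" by simp
  have le_mzv: "nested_sum (mzv_factors ks) 0 M \<le> mzv ks" for M
    using incseq_le[OF incseq_nested_sum_mzv_factors mzv_LIMSEQ[OF adm]] .
  show "eventually (\<lambda>q. \<forall>M. ZqM_word q M ks \<le> Zq_word q ks) (at_left 1)"
    using eventually_at_left_1
    by eventually_elim (metis incseq_le incseq_ZqM_word ZqM_word_LIMSEQ ks(2))
  show "eventually (\<lambda>q. Zq_word q ks \<le> mzv ks) (at_left 1)"
    using eventually_at_left_1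
    by eventually_elim (auto intro!: Zq_word_bounds(2) ks order_trans[OF ZqM_word_le_nested_sum_mzv_factors le_mzv])
qed

theorem proposition3p4:
  shows "(\<forall>ks. admissible ks \<longrightarrow> ((\<lambda>q. Zq q (gidx ks)) \<longlongrightarrow> mzv ks) (at_left 1))
       \<and> (\<forall>w\<in>nset. ((\<lambda>q. Zq q w) \<longlongrightarrow> 0) (at_left 1))"
  using tendsto_Zq_gidx tendsto_Zq_nset by blast

end
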